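(* For a connected cubic graph $G$, the following are equivalent: (a) $G$ is bipartite; (b) $1$ is an eigenvalue of the truncation $T(G)$; (c) $1$ is a simple eigenvalue of $T(G)$.
   Context: The truncation $T(G)$ of a cubic multigraph $G$ is the cubic graph in which every vertex $v$ of $G$ is replaced by a triangle whose three vertices correspond to the three edge-ends at $v$, and every edge $uv$ of $G$ gives an edge of $T(G)$ joining the corresponding vertices of the triangles of $u$ and $v$ (equivalently, $T(G)$ is the line graph of the subdivision of $G$). Eigenvalues are those of the adjacency matrix; simple means a $1$-dimensional eigenspace. *)

theory Defs
  imports "HOL-Analysis.Analysis"
begin

definition simple_graph :: "('a \<Rightarrow> 'a \<Rightarrow> bool) \<Rightarrow> bool" where
  "simple_graph E \<longleftrightarrow> (\<forall>u v. E u v \<longrightarrow> E v u) \<and> (\<forall>v. \<not> E v v)"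

definition cubic :: "('a::finite \<Rightarrow> 'a \<Rightarrow> bool) \<Rightarrow> bool" where
  "cubic E \<longleftrightarrow> (\<forall>v. card {w. E v w} = 3)"

definition connected_graph :: "('a \<Rightarrow> 'a \<Rightarrow> bool) \<Rightarrow> bool" where
  "connected_graph E \<longleftrightarrow> (\<forall>u v. E\<^sup>*\<^sup>* u v)"

definition bipartite :: "('a \<Rightarrow> 'a \<Rightarrow> bool) \<Rightarrow> bool" where
  "bipartite E \<longleftrightarrow> (\<exists>c :: 'a \<Rightarrow> bool. \<forall>u v. E u v \<longrightarrow> c u \<noteq> c v)"

text \<open>Truncation T(G): its vertices are the edge-ends (darts) (v,w) with E v w
(the end at v of the edge vw).  The three ends at v form a triangle, and the
two ends (v,w), (w,v) of each edge vw are joined.\<close>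

definition trunc_verts :: "('a \<Rightarrow> 'a \<Rightarrow> bool) \<Rightarrow> ('a \<times> 'a) set" where
  "trunc_verts E = {(v, w). E v w}"

definition trunc_adj :: "('a \<Rightarrow> 'a \<Rightarrow> bool) \<Rightarrow> ('a \<times> 'a) \<Rightarrow> ('a \<times> 'a) \<Rightarrow> bool" where
  "trunc_adj E d d' \<longleftrightarrow> d \<in> trunc_verts E \<and> d' \<in> trunc_verts E \<and>
     ((fst d = fst d' \<and> snd d \<noteq> snd d') \<or> (fst d = snd d' \<and> snd d = fst d'))"

text \<open>Adjacency eigenspace of a graph with finite vertex set V \<subseteq> UNIV :: 'v set
and adjacency relation R: real vectors indexed by V (coordinates outside V are 0)
with A x = \<mu> x, where A is the 0/1 adjacency matrix of R on V.\<close>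

definition adj_eigenspace ::
  "'v::finite set \<Rightarrow> ('v \<Rightarrow> 'v \<Rightarrow> bool) \<Rightarrow> real \<Rightarrow> (real ^ 'v) set" where
  "adj_eigenspace V R \<mu> = {x. (\<forall>v. v \<notin> V \<longrightarrow> x $ v = 0) \<and>
     (\<forall>v\<in>V. (\<Sum>w\<in>V. (if R v w then 1 else 0) * x $ w) = \<mu> * x $ v)}"

definition adj_eigenvalue :: "'v::finite set \<Rightarrow> ('v \<Rightarrow> 'v \<Rightarrow> bool) \<Rightarrow> real \<Rightarrow> bool" where
  "adj_eigenvalue V R \<mu> \<longleftrightarrow> (\<exists>x \<in> adj_eigenspace V R \<mu>. x \<noteq> 0)"

definition simple_adj_eigenvalue :: "'v::finite set \<Rightarrow> ('v \<Rightarrow> 'v \<Rightarrow> bool) \<Rightarrow> real \<Rightarrow> bool" where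
  "simple_adj_eigenvalue V R \<mu> \<longleftrightarrow> dim (adj_eigenspace V R \<mu>) = 1"

end

theory Submission
  imports Defs
begin

(* Let x be a 1-eigenvector of T(G) and S(v) the sum of x over the three ends at v.
   The eigen-equation at the end (v,w) reads x(w,v) + S(v) - x(v,w) = x(v,w); together
   with the equation at (w,v) it gives x(v,w) = (2 S(v) + S(w)) / 3, and summing over w
   shows that S is a (-3)-eigenvector of G.  The quadratic form of the signless Laplacian,
   the sum over edges vw of (S(v) + S(w))^2, then vanishes, so S changes sign along every
   edge and x(v,w) = S(v) / 3.  Hence a nonzero x yields the 2-colouring by the sign of S,
   and by connectedness x is determined by a single value S(u).  Conversely, a 2-colouring
   c gives the eigenvector x(v,w) = +-1 according to c(v). *)

lemma subspace_adj_eigenspace: "subspace (adj_eigenspace V R \<mu>)"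
proof -
  have scale: "(\<Sum>w\<in>V. a w * (c * x $ w)) = c * (\<Sum>w\<in>V. a w * x $ w)"
    for a and c :: real and x :: "real ^ 'a"
    by (simp add: sum_distrib_left mult.left_commute)
  show ?thesis
    unfolding subspace_def adj_eigenspace_def by (simp add: distrib_left sum.distrib scale)
qed

lemma simple_adj_eigenvalue_imp_adj_eigenvalue:
  "simple_adj_eigenvalue V R \<mu> \<Longrightarrow> adj_eigenvalue V R \<mu>"
  unfolding simple_adj_eigenvalue_def adj_eigenvalue_def
  by (metis dim_eq_0 singletonI subsetI zero_neq_one)

text \<open>No connectedness is needed: the hypothesis makes the quadratic form
  \<open>\<Sum>(v,u). (f u + f v)\<^sup>2\<close> over all ordered adjacent pairs vanish.\<close>

lemma neighbour_sum_eq_0_imp_alternating: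
  fixes E :: "'a::finite \<Rightarrow> 'a \<Rightarrow> bool" and f :: "'a \<Rightarrow> real"
  assumes sg: "simple_graph E" and nsum: "\<And>v. (\<Sum>u | E v u. f u + f v) = 0" and "E v w"
  shows "f w = - f v"
proof -
  define D where "D = {(v, u). E v u}"
  have D_Sigma: "D = Sigma UNIV (\<lambda>v. {u. E v u})" by (auto simp: D_def)
  have swap_D: "prod.swap ` D = D" using sg by (auto simp: D_def simple_graph_def)
  have "(\<Sum>(v, u)\<in>D. f v * (f u + f v)) = (\<Sum>v\<in>UNIV. f v * (\<Sum>u | E v u. f u + f v))"
    by (simp add: D_Sigma sum.Sigma[symmetric] sum_distrib_left)
  also have "\<dots> = 0" by (simp add: nsum)
  finally have half: "(\<Sum>(v, u)\<in>D. f v * (f u + f v)) = 0" .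
  have "(\<Sum>(v, u)\<in>D. f u * (f v + f u)) = (\<Sum>(v, u)\<in>prod.swap ` D. f v * (f u + f v))"
    by (simp add: sum.reindex case_prod_beta)
  also have "\<dots> = 0" by (simp add: swap_D half)
  finally have other_half: "(\<Sum>(v, u)\<in>D. f u * (f v + f u)) = 0" .
  have "(\<Sum>(v, u)\<in>D. (f u + f v)\<^sup>2)
      = (\<Sum>(v, u)\<in>D. f u * (f v + f u)) + (\<Sum>(v, u)\<in>D. f v * (f u + f v))"
    unfolding sum.distrib[symmetric] by (rule sum.cong) (auto simp: power2_eq_square algebra_simps)
  also have "\<dots> = 0" by (simp add: half other_half)
  finally have "(\<Sum>(v, u)\<in>D. (f u + f v)\<^sup>2) = 0" .
  then have "\<forall>(v, u)\<in>D. (f u + f v)\<^sup>2 = 0"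
    by (subst (asm) sum_nonneg_eq_0_iff) auto
  then have "f w + f v = 0" using \<open>E v w\<close> by (auto simp: D_def)
  then show ?thesis by linarith
qed

lemma connected_alternating_eq_0:
  fixes f :: "'a \<Rightarrow> real"
  assumes "connected_graph E" and alt: "\<And>v w. E v w \<Longrightarrow> f w = - f v" and "f u = 0"
  shows "f v = 0"
proof -
  have "E\<^sup>*\<^sup>* u v" using assms(1) by (simp add: connected_graph_def)
  then show ?thesis
    by (induction rule: rtranclp_induct) (use \<open>f u = 0\<close> alt in auto)
qed

definition dart_sum :: "('a::finite \<Rightarrow> 'a \<Rightarrow> bool) \<Rightarrow> real ^ ('a \<times> 'a) \<Rightarrow> 'a \<Rightarrow> real" where
  "dart_sum E x v = (\<Sum>u | E v u. x $ (v, u))"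

lemma trunc_adj_sum:
  fixes E :: "'a::finite \<Rightarrow> 'a \<Rightarrow> bool"
  assumes sg: "simple_graph E" and "E v w"
  shows "(\<Sum>d\<in>trunc_verts E. (if trunc_adj E (v, w) d then 1 else 0) * x $ d)
         = x $ (w, v) + dart_sum E x v - x $ (v, w)"
proof -
  let ?ends = "(\<lambda>u. (v, u)) ` ({u. E v u} - {w})"
  have nbrs: "{d\<in>trunc_verts E. trunc_adj E (v, w) d} = insert (w, v) ?ends"
    using assms by (auto simp: trunc_adj_def trunc_verts_def simple_graph_def)
  have "(\<Sum>d\<in>trunc_verts E. (if trunc_adj E (v, w) d then 1 else 0) * x $ d)
      = (\<Sum>d\<in>trunc_verts E. if trunc_adj E (v, w) d then x $ d else 0)"
    by (rule sum.cong) auto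
  also have "\<dots> = (\<Sum>d\<in>{d\<in>trunc_verts E. trunc_adj E (v, w) d}. x $ d)"
    by (simp add: sum.inter_filter)
  also have "\<dots> = x $ (w, v) + (\<Sum>d\<in>?ends. x $ d)"
    unfolding nbrs using sg by (subst sum.insert) (auto simp: simple_graph_def)
  also have "(\<Sum>d\<in>?ends. x $ d) = (\<Sum>u\<in>{u. E v u} - {w}. x $ (v, u))"
    by (simp add: sum.reindex inj_on_def)
  also have "\<dots> = dart_sum E x v - x $ (v, w)"
    using \<open>E v w\<close> by (simp add: sum_diff1 dart_sum_def)
  finally show ?thesis by simp
qed

lemma trunc_eigenvector_dart:
  fixes E :: "'a::finite \<Rightarrow> 'a \<Rightarrow> bool"
  assumes sg: "simple_graph E" and x: "x \<in> adj_eigenspace (trunc_verts E) (trunc_adj E) 1"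
    and "E v w"
  shows "x $ (v, w) = (2 * dart_sum E x v + dart_sum E x w) / 3"
proof -
  have eq: "x $ (b, a) = 2 * x $ (a, b) - dart_sum E x a" if "E a b" for a b
  proof -
    have "(a, b) \<in> trunc_verts E" using that by (simp add: trunc_verts_def)
    then show ?thesis
      using x trunc_adj_sum[OF sg that, of x] unfolding adj_eigenspace_def by auto
  qed
  have "E w v" using sg \<open>E v w\<close> by (simp add: simple_graph_def)
  then show ?thesis using eq[OF \<open>E v w\<close>] eq[OF \<open>E w v\<close>] by simp
qed

lemma trunc_eigenvector_alternating:
  fixes E :: "'a::finite \<Rightarrow> 'a \<Rightarrow> bool"
  assumes sg: "simple_graph E" and cub: "cubic E"
    and x: "x \<in> adj_eigenspace (trunc_verts E) (trunc_adj E) 1" and "E v w"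
  shows "dart_sum E x w = - dart_sum E x v"
proof (rule neighbour_sum_eq_0_imp_alternating[OF sg _ \<open>E v w\<close>])
  fix a
  let ?S = "dart_sum E x"
  have card3: "card {u. E a u} = 3" using cub by (simp add: cubic_def)
  have "?S a = (\<Sum>u | E a u. x $ (a, u))" by (simp add: dart_sum_def)
  also have "\<dots> = (\<Sum>u | E a u. (2 * ?S a + ?S u) / 3)"
    by (rule sum.cong) (simp_all add: trunc_eigenvector_dart[OF sg x])
  also have "\<dots> = (\<Sum>u | E a u. ?S u + ?S a) / 3 + ?S a"
    by (simp add: sum_divide_distrib[symmetric] sum.distrib card3)
  finally show "(\<Sum>u | E a u. ?S u + ?S a) = 0" by simp
qed

lemma trunc_eigenvector_eq:
  fixes E :: "'a::finite \<Rightarrow> 'a \<Rightarrow> bool"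
  assumes sg: "simple_graph E" and cub: "cubic E"
    and x: "x \<in> adj_eigenspace (trunc_verts E) (trunc_adj E) 1" and "E v w"
  shows "x $ (v, w) = dart_sum E x v / 3"
  using trunc_eigenvector_dart[OF sg x \<open>E v w\<close>] trunc_eigenvector_alternating[OF assms]
  by simp

lemma trunc_eigenvector_eq_0:
  fixes E :: "'a::finite \<Rightarrow> 'a \<Rightarrow> bool"
  assumes sg: "simple_graph E" and cub: "cubic E" and con: "connected_graph E"
    and x: "x \<in> adj_eigenspace (trunc_verts E) (trunc_adj E) 1" and "dart_sum E x u = 0"
  shows "x = 0"
proof (subst vec_eq_iff, intro allI)
  fix d
  show "x $ d = 0 $ d"
  proof (cases "d \<in> trunc_verts E")
    case True
    then obtain v w where d: "d = (v, w)" and "E v w" by (auto simp: trunc_verts_def)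
    have "dart_sum E x v = 0"
      using connected_alternating_eq_0[where f = "dart_sum E x", OF con _ \<open>dart_sum E x u = 0\<close>]
        trunc_eigenvector_alternating[OF sg cub x] by blast
    then show ?thesis using trunc_eigenvector_eq[OF sg cub x \<open>E v w\<close>] d by simp
  next
    case False
    then have "x $ d = 0" using x unfolding adj_eigenspace_def by blast
    then show ?thesis by simp
  qed
qed

lemma bipartite_imp_trunc_eigenvalue_1:
  fixes E :: "'a::finite \<Rightarrow> 'a \<Rightarrow> bool"
  assumes sg: "simple_graph E" and cub: "cubic E" and "bipartite E"
  shows "adj_eigenvalue (trunc_verts E) (trunc_adj E) 1"
proof -
  obtain c :: "'a \<Rightarrow> bool" where c: "\<And>u v. E u v \<Longrightarrow> c u \<noteq> c v"
    using \<open>bipartite E\<close> unfolding bipartite_def by blast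
  have card3: "card {u. E v u} = 3" for v using cub by (simp add: cubic_def)
  define s where "s v = (if c v then 1 else -1 :: real)" for v
  define y :: "real ^ ('a \<times> 'a)" where "y = (\<chi> d. if d \<in> trunc_verts E then s (fst d) else 0)"
  have y_dart: "y $ (v, w) = s v" if "E v w" for v w
    using that by (simp add: y_def trunc_verts_def)
  have "y \<in> adj_eigenspace (trunc_verts E) (trunc_adj E) 1"
    unfolding adj_eigenspace_def
  proof (intro CollectI conjI allI impI ballI)
    fix d assume "d \<notin> trunc_verts E"
    then show "y $ d = 0" by (simp add: y_def)
  next
    fix d assume "d \<in> trunc_verts E"
    then obtain v w where d: "d = (v, w)" and "E v w" by (auto simp: trunc_verts_def)
    have "E w v" using sg \<open>E v w\<close> by (simp add: simple_graph_def)
    have "dart_sum E y v = 3 * s v"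
      by (simp add: dart_sum_def y_dart card3)
    moreover have "s w = - s v" using c[OF \<open>E v w\<close>] by (simp add: s_def)
    ultimately show "(\<Sum>d'\<in>trunc_verts E. (if trunc_adj E d d' then 1 else 0) * y $ d') = 1 * y $ d"
      using trunc_adj_sum[OF sg \<open>E v w\<close>, of y] d y_dart[OF \<open>E v w\<close>] y_dart[OF \<open>E w v\<close>]
      by simp
  qed
  moreover obtain v w where "E v w"
    using card3 by (metis Collect_empty_eq card.empty zero_neq_numeral)
  then have "y \<noteq> 0" by (metis y_dart s_def zero_index zero_neq_one neg_equal_0_iff_equal)
  ultimately show ?thesis by (auto simp: adj_eigenvalue_def)
qed

lemma trunc_eigenvalue_1_imp_bipartite:
  fixes E :: "'a::finite \<Rightarrow> 'a \<Rightarrow> bool"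
  assumes sg: "simple_graph E" and cub: "cubic E" and con: "connected_graph E"
    and "adj_eigenvalue (trunc_verts E) (trunc_adj E) 1"
  shows "bipartite E"
proof -
  obtain x where x: "x \<in> adj_eigenspace (trunc_verts E) (trunc_adj E) 1" and "x \<noteq> 0"
    using assms(4) by (auto simp: adj_eigenvalue_def)
  then have nonzero: "dart_sum E x v \<noteq> 0" for v
    using trunc_eigenvector_eq_0[OF sg cub con x] by blast
  show ?thesis unfolding bipartite_def
  proof (intro exI allI impI)
    fix u v assume "E u v"
    then show "(dart_sum E x u > 0) \<noteq> (dart_sum E x v > 0)"
      using trunc_eigenvector_alternating[OF sg cub x] nonzero[of u] by fastforce
  qed
qed

lemma trunc_eigenvalue_1_simple:
  fixes E :: "'a::finite \<Rightarrow> 'a \<Rightarrow> bool"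
  assumes sg: "simple_graph E" and cub: "cubic E" and con: "connected_graph E"
    and "adj_eigenvalue (trunc_verts E) (trunc_adj E) 1"
  shows "simple_adj_eigenvalue (trunc_verts E) (trunc_adj E) 1"
proof -
  let ?X = "adj_eigenspace (trunc_verts E) (trunc_adj E) 1"
  obtain y where y: "y \<in> ?X" and "y \<noteq> 0"
    using assms(4) by (auto simp: adj_eigenvalue_def)
  fix u :: 'a
  have y_u: "dart_sum E y u \<noteq> 0"
    using trunc_eigenvector_eq_0[OF sg cub con y] \<open>y \<noteq> 0\<close> by blast
  have "x \<in> span {y}" if x: "x \<in> ?X" for x
  proof -
    define r where "r = dart_sum E x u / dart_sum E y u"
    have "dart_sum E (x - r *\<^sub>R y) u = dart_sum E x u - r * dart_sum E y u"
      by (simp add: dart_sum_def sum_subtractf sum_distrib_left)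
    then have "dart_sum E (x - r *\<^sub>R y) u = 0"
      using y_u by (simp add: r_def)
    moreover have "x - r *\<^sub>R y \<in> ?X"
      using subspace_adj_eigenspace x y by (metis subspace_diff subspace_scale)
    ultimately have "x = r *\<^sub>R y"
      using trunc_eigenvector_eq_0[OF sg cub con] by fastforce
    then show ?thesis by (simp add: span_base span_scale)
  qed
  then have "span {y} = ?X"
    using y subspace_adj_eigenspace by (intro span_subspace) auto
  then show ?thesis
    using \<open>y \<noteq> 0\<close> unfolding simple_adj_eigenvalue_def by (metis dim_span dim_singleton)
qed

theorem corollary6p3:
  fixes E :: "'a::finite \<Rightarrow> 'a \<Rightarrow> bool"
  assumes "simple_graph E" and "cubic E" and "connected_graph E"
  shows "(bipartite E \<longleftrightarrow> adj_eigenvalue (trunc_verts E) (trunc_adj E) 1)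
       \<and> (adj_eigenvalue (trunc_verts E) (trunc_adj E) 1
            \<longleftrightarrow> simple_adj_eigenvalue (trunc_verts E) (trunc_adj E) 1)"
  using bipartite_imp_trunc_eigenvalue_1[OF assms(1,2)]
    trunc_eigenvalue_1_imp_bipartite[OF assms]
    trunc_eigenvalue_1_simple[OF assms]
    simple_adj_eigenvalue_imp_adj_eigenvalue
  by blast

end
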